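(* Let $\mathcal{H}=(C,F,D,G)$ be a hybrid system on $\mathcal{X}$, let $p$ be an atomic proposition and $K:=\{x\in\mathcal{X}:p(x)=1\}$. Then $(\phi,(t,j))\models\bigcirc p$ for every maximal solution $\phi$ to $\mathcal{H}$ and every $(t,j)\in\operatorname{dom}\phi$ if and only if all of the following hold: (a) each nontrivial solution $\phi$ to $\mathcal{H}$ satisfies $\phi(0,0)\in D$; (b) no flow of $\mathcal{H}$ is possible from any $x\in C$ (i.e., there is no solution $\phi$ with $\phi(0,0)=x\in C$ and $[0,\varepsilon)\times\{0\}\subset\operatorname{dom}\phi$ for some $\varepsilon>0$); (c) $G(D)\subset K\cap D$; (d) $\overline C\subset D$.
   Context: Hybrid systems. A hybrid system $\mathcal{H}=(C,F,D,G)$ on a state space $\mathcal{X}\subset\mathbb{R}^n$ is given by a flow set $C\subset\mathcal{X}$, a set-valued flow map $F:\mathcal{X}\rightrightarrows\mathcal{X}$, a jump set $D\subset\mathcal{X}$ and a set-valued jump map $G:\mathcal{X}\rightrightarrows\mathcal{X}$, and represents $\dot x\in F(x)$ for $x\in C$, $x^+\in G(x)$ for $x\in D$. Standing assumptions: $C\subset\operatorname{dom}F$, $D\subset\operatorname{dom}G$, $\overline{C}\cup D\cup G(D)\subset\mathcal{X}$ ($\overline C$ is the closure of $C$). A set $E\subset\mathbb{R}_{\ge0}\times\mathbb{N}$ is a hybrid time domain if for every $(T,J)\in E$ there are $0=t_0\le t_1\le\dots\le t_{J+1}$ with $E\cap([0,T]\times\{0,\dots,J\})=\bigcup_{j=0}^J([t_j,t_{j+1}]\times\{j\})$.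 A hybrid arc is a map $\phi:\operatorname{dom}\phi\to\mathbb{R}^n$ on a hybrid time domain such that for each $j$, $t\mapsto\phi(t,j)$ is locally absolutely continuous on $I^j=\{t:(t,j)\in\operatorname{dom}\phi\}$. A hybrid arc $\phi$ is a solution to $\mathcal{H}$ if (i) $\phi(0,0)\in\overline C\cup D$; (ii) for each $j$ such that $I^j$ has nonempty interior, $\phi(t,j)\in C$ for all $t\in\operatorname{int}I^j$ and $\dot\phi(t,j)\in F(\phi(t,j))$ for almost all $t\in I^j$; (iii) for each $(t,j)\in\operatorname{dom}\phi$ with $(t,j+1)\in\operatorname{dom}\phi$, $\phi(t,j)\in D$ and $\phi(t,j+1)\in G(\phi(t,j))$. A solution is nontrivial if its domain contains at least two points; it is maximal if it cannot be extended to a solution with strictly larger domain. Temporal logic. An atomic proposition is a function $p:\mathcal{X}\to\{0,1\}$; write $\phi(t,j)\Vdash p$ if $p(\phi(t,j))=1$. $(\phi,(t,j))\models p$ iff $\phi(t,j)\Vdash p$; $(\phi,(t,j))\models\bigcirc p$ iff $(t,j+1)\in\operatorname{dom}\phi$ and $(\phi,(t,j+1))\models p$. The set $K$ is assumed nonempty. *)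

theory Defs
  imports "HOL-Analysis.Analysis"
begin

definition sv_dom :: "('a \<Rightarrow> 'b set) \<Rightarrow> 'a set" where
  "sv_dom M = {x. M x \<noteq> {}}"

definition sv_image :: "('a \<Rightarrow> 'b set) \<Rightarrow> 'a set \<Rightarrow> 'b set" where
  "sv_image M S = (\<Union>x\<in>S. M x)"

definition hybrid_system :: "'a::euclidean_space set \<Rightarrow> 'a set \<Rightarrow> ('a \<Rightarrow> 'a set)
    \<Rightarrow> 'a set \<Rightarrow> ('a \<Rightarrow> 'a set) \<Rightarrow> bool" where
  "hybrid_system X C F D G \<longleftrightarrow>
     C \<subseteq> X \<and> D \<subseteq> X \<and>
     sv_dom F \<subseteq> X \<and> sv_dom G \<subseteq> X \<and> (\<forall>x. F x \<subseteq> X \<and> G x \<subseteq> X) \<and>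
     C \<subseteq> sv_dom F \<and> D \<subseteq> sv_dom G \<and>
     closure C \<union> D \<union> sv_image G D \<subseteq> X"

definition hybrid_time_domain :: "(real \<times> nat) set \<Rightarrow> bool" where
  "hybrid_time_domain E \<longleftrightarrow>
     E \<subseteq> {0..} \<times> UNIV \<and>
     (\<forall>T J. (T, J) \<in> E \<longrightarrow>
        (\<exists>\<tau>::nat \<Rightarrow> real. \<tau> 0 = 0 \<and> (\<forall>j\<le>J. \<tau> j \<le> \<tau> (Suc j)) \<and>
           E \<inter> ({0..T} \<times> {0..J}) = (\<Union>j\<le>J. {\<tau> j..\<tau> (Suc j)} \<times> {j})))"

definition tdom_slice :: "(real \<times> nat) set \<Rightarrow> nat \<Rightarrow> real set" where
  "tdom_slice E j = {t. (t, j) \<in> E}"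

definition absolutely_continuous_fun_on :: "real set \<Rightarrow> (real \<Rightarrow> 'a::real_normed_vector) \<Rightarrow> bool" where
  "absolutely_continuous_fun_on S f \<longleftrightarrow>
     (\<forall>\<epsilon>>0. \<exists>\<delta>>0. \<forall>(n::nat) (a::nat \<Rightarrow> real) b.
        (\<forall>k<n. a k \<le> b k \<and> {a k..b k} \<subseteq> S) \<and>
        disjoint_family_on (\<lambda>k. {a k<..<b k}) {..<n} \<and>
        (\<Sum>k<n. b k - a k) < \<delta> \<longrightarrow>
        (\<Sum>k<n. norm (f (b k) - f (a k))) < \<epsilon>)"

definition locally_absolutely_continuous_on :: "real set \<Rightarrow> (real \<Rightarrow> 'a::real_normed_vector) \<Rightarrow> bool" where
  "locally_absolutely_continuous_on I f \<longleftrightarrow>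
     (\<forall>a b. {a..b} \<subseteq> I \<longrightarrow> absolutely_continuous_fun_on {a..b} f)"

text \<open>A hybrid arc is a pair of a hybrid time domain E (its domain) and a map phi,
  of which only the values on E matter.\<close>
definition hybrid_arc :: "(real \<times> nat) set \<Rightarrow> (real \<times> nat \<Rightarrow> 'a::real_normed_vector) \<Rightarrow> bool" where
  "hybrid_arc E \<phi> \<longleftrightarrow> hybrid_time_domain E \<and>
     (\<forall>j. locally_absolutely_continuous_on (tdom_slice E j) (\<lambda>t. \<phi> (t, j)))"

definition is_solution :: "'a::euclidean_space set \<Rightarrow> ('a \<Rightarrow> 'a set) \<Rightarrow> 'a set \<Rightarrow> ('a \<Rightarrow> 'a set)
    \<Rightarrow> (real \<times> nat) set \<Rightarrow> (real \<times> nat \<Rightarrow> 'a) \<Rightarrow> bool" where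
  "is_solution C F D G E \<phi> \<longleftrightarrow>
     hybrid_arc E \<phi> \<and>
     (0, 0) \<in> E \<and> \<phi> (0, 0) \<in> closure C \<union> D \<and>
     (\<forall>j. interior (tdom_slice E j) \<noteq> {} \<longrightarrow>
        (\<forall>t\<in>interior (tdom_slice E j). \<phi> (t, j) \<in> C) \<and>
        (AE t in lebesgue. t \<in> tdom_slice E j \<longrightarrow>
           (\<exists>v. ((\<lambda>s. \<phi> (s, j)) has_vector_derivative v) (at t within tdom_slice E j)
                \<and> v \<in> F (\<phi> (t, j))))) \<and>
     (\<forall>t j. (t, j) \<in> E \<and> (t, Suc j) \<in> E \<longrightarrow> \<phi> (t, j) \<in> D \<and> \<phi> (t, Suc j) \<in> G (\<phi> (t, j)))"

definition nontrivial_solution where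
  "nontrivial_solution C F D G E \<phi> \<longleftrightarrow> is_solution C F D G E \<phi> \<and> (\<exists>s1\<in>E. \<exists>s2\<in>E. s1 \<noteq> s2)"

definition maximal_solution where
  "maximal_solution C F D G E \<phi> \<longleftrightarrow> is_solution C F D G E \<phi> \<and>
     \<not> (\<exists>E' \<psi>. is_solution C F D G E' \<psi> \<and> E \<subset> E' \<and> (\<forall>s\<in>E. \<psi> s = \<phi> s))"

definition models_next :: "(real \<times> nat) set \<Rightarrow> (real \<times> nat \<Rightarrow> 'a) \<Rightarrow> real \<times> nat \<Rightarrow> ('a \<Rightarrow> bool) \<Rightarrow> bool" where
  "models_next E \<phi> s p \<longleftrightarrow> (fst s, Suc (snd s)) \<in> E \<and> p (\<phi> (fst s, Suc (snd s)))"

end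

theory Submission
  imports Defs
begin

text \<open>If every maximal solution satisfies \<open>\<circle>p\<close> everywhere, then so does a maximal extension
  (Zorn's lemma) of any given solution: a jump out of \<open>(0, 0)\<close> forces the initial point into
  \<open>D\<close>, a jump after an initial flow interval is incompatible with the structure of hybrid time
  domains, and the two-point solution \<open>x \<rightarrow> y \<in> G x\<close> must jump again from \<open>y\<close>, landing in
  \<open>K\<close>. Conversely, if no flow is possible from \<open>C\<close>, every slice of a solution's time domain has
  empty interior (an interior point would start a translated flowing solution), so solutions are
  purely discrete; by (c) and (d) they stay in \<open>D \<subseteq> dom G\<close>, hence a maximal solution can
  always jump once more, and each of its jumps lands in \<open>K\<close>.\<close>

section \<open>Absolute continuity\<close>

lemma absolutely_continuous_fun_on_subsingleton:
  assumes "\<And>x y. x \<in> S \<Longrightarrow> y \<in> S \<Longrightarrow> x = y"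
  shows "absolutely_continuous_fun_on S f"
  unfolding absolutely_continuous_fun_on_def
proof (intro allI impI exI[of _ 1] conjI)
  fix \<epsilon> :: real and n :: nat and a b :: "nat \<Rightarrow> real"
  assume "\<epsilon> > 0" and "(\<forall>k<n. a k \<le> b k \<and> {a k..b k} \<subseteq> S) \<and>
        disjoint_family_on (\<lambda>k. {a k<..<b k}) {..<n} \<and> (\<Sum>k<n. b k - a k) < 1"
  then have "\<And>k. k < n \<Longrightarrow> a k = b k"
    using assms by (meson atLeastAtMost_iff order_refl subsetD)
  with \<open>\<epsilon> > 0\<close> show "(\<Sum>k<n. norm (f (b k) - f (a k))) < \<epsilon>"
    by simp
qed simp

lemma absolutely_continuous_fun_on_translate:
  assumes "absolutely_continuous_fun_on ((+) c ` S) f" and "\<And>u. u \<in> S \<Longrightarrow> g u = f (c + u)"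
  shows "absolutely_continuous_fun_on S g"
  unfolding absolutely_continuous_fun_on_def
proof (intro allI impI)
  fix \<epsilon> :: real
  assume "\<epsilon> > 0"
  from assms(1)[unfolded absolutely_continuous_fun_on_def, rule_format, OF this]
  obtain \<delta> where "\<delta> > 0" and \<delta>: "\<forall>(n::nat) (a::nat \<Rightarrow> real) b.
      (\<forall>k<n. a k \<le> b k \<and> {a k..b k} \<subseteq> (+) c ` S) \<and>
      disjoint_family_on (\<lambda>k. {a k<..<b k}) {..<n} \<and> (\<Sum>k<n. b k - a k) < \<delta> \<longrightarrow>
      (\<Sum>k<n. norm (f (b k) - f (a k))) < \<epsilon>"
    by blast
  have "(\<Sum>k<n. norm (g (b k) - g (a k))) < \<epsilon>"
    if ab: "\<forall>k<n. a k \<le> b k \<and> {a k..b k} \<subseteq> S"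
      and disj: "disjoint_family_on (\<lambda>k. {a k<..<b k}) {..<n}"
      and small: "(\<Sum>k<n. b k - a k) < \<delta>" for n :: nat and a b :: "nat \<Rightarrow> real"
  proof -
    have endpoints: "a k \<in> S \<and> b k \<in> S" if "k < n" for k
      using ab[rule_format, OF that] by auto
    have "{c + a k..c + b k} = (+) c ` {a k..b k}" for k
      by simp
    with ab have "\<forall>k<n. c + a k \<le> c + b k \<and> {c + a k..c + b k} \<subseteq> (+) c ` S"
      by (metis add_le_cancel_left image_mono)
    moreover have "disjoint_family_on (\<lambda>k. {c + a k<..<c + b k}) {..<n}"
      using disj
      by (simp add: disjoint_family_on_def flip: min_add_distrib_right max_add_distrib_right)
    moreover have "(\<Sum>k<n. (c + b k) - (c + a k)) < \<delta>"
      using small by simp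
    ultimately have "(\<Sum>k<n. norm (f (c + b k) - f (c + a k))) < \<epsilon>"
      using \<delta>[THEN spec[of _ n], THEN spec[of _ "\<lambda>k. c + a k"], THEN spec[of _ "\<lambda>k. c + b k"]]
      by blast
    moreover have "(\<Sum>k<n. norm (g (b k) - g (a k))) = (\<Sum>k<n. norm (f (c + b k) - f (c + a k)))"
      using endpoints assms(2) by (intro sum.cong) simp_all
    ultimately show ?thesis
      by simp
  qed
  with \<open>\<delta> > 0\<close> show "\<exists>\<delta>>0. \<forall>(n::nat) (a::nat \<Rightarrow> real) b. (\<forall>k<n. a k \<le> b k \<and> {a k..b k} \<subseteq> S) \<and>
      disjoint_family_on (\<lambda>k. {a k<..<b k}) {..<n} \<and> (\<Sum>k<n. b k - a k) < \<delta> \<longrightarrow>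
      (\<Sum>k<n. norm (g (b k) - g (a k))) < \<epsilon>"
    by blast
qed

section \<open>Lebesgue-almost-everywhere properties\<close>

lemma AE_lebesgue_translate:
  fixes c :: "'a::euclidean_space"
  assumes "AE x in lebesgue. P x"
  shows "AE x in lebesgue. P (c + x)"
proof -
  obtain N where "N \<in> null_sets lebesgue" and N: "{x. \<not> P x} \<subseteq> N"
    using assms unfolding eventually_ae_filter by auto
  then have "negligible N"
    by (simp add: negligible_iff_null_sets)
  from negligible_translation[OF this, of "- c"]
  have "(+) (- c) ` N \<in> null_sets lebesgue"
    by (simp add: negligible_iff_null_sets)
  moreover have "{x. \<not> P (c + x)} \<subseteq> (+) (- c) ` N"
    using N by (force intro: rev_image_eqI[of "c + x" for x])
  ultimately show ?thesis
    unfolding eventually_ae_filter by auto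
qed

lemma AE_convex_open_cover:
  fixes S :: "'a::euclidean_space set"
  assumes "convex S" and open_cover: "\<And>U. U \<in> \<U> \<Longrightarrow> open U" "interior S \<subseteq> \<Union>\<U>"
    and AE_cover: "\<And>U. U \<in> \<U> \<Longrightarrow> AE x in lebesgue. x \<in> U \<longrightarrow> P x"
  shows "AE x in lebesgue. x \<in> S \<longrightarrow> P x"
proof -
  obtain \<V> where "\<V> \<subseteq> \<U>" "countable \<V>" "\<Union>\<V> = \<Union>\<U>"
    using Lindelof[of \<U>] open_cover(1) by metis
  then have "AE x in lebesgue. \<forall>U\<in>\<V>. x \<in> U \<longrightarrow> P x"
    using AE_cover by (subst AE_ball_countable) auto
  moreover have "AE x in lebesgue. x \<notin> frontier S"
    using negligible_convex_frontier[OF \<open>convex S\<close>]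
    by (intro AE_not_in) (simp add: negligible_iff_null_sets)
  ultimately show ?thesis
  proof eventually_elim
    case (elim x)
    show ?case
    proof
      assume "x \<in> S"
      with elim(2) have "x \<in> interior S"
        using closure_subset unfolding frontier_def by blast
      with elim(1) show "P x"
        using open_cover(2) \<open>\<Union>\<V> = \<Union>\<U>\<close> by blast
    qed
  qed
qed

section \<open>Hybrid time domains\<close>

lemma chain_subset_Union_two_points:
  assumes "chain\<^sub>\<subseteq> \<C>" "x \<in> \<Union>\<C>" "y \<in> \<Union>\<C>"
  obtains A where "A \<in> \<C>" "x \<in> A" "y \<in> A"
  using finite_subset_Union_chain[of "{x, y}" \<C> UNIV] assms
  by (auto simp: chain_subset_alt_def)

lemma hybrid_time_domainE:
  assumes "hybrid_time_domain E" "(T, J) \<in> E"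
  obtains \<tau> :: "nat \<Rightarrow> real" where "\<tau> 0 = 0" "\<And>j. j \<le> J \<Longrightarrow> \<tau> j \<le> \<tau> (Suc j)"
    "\<And>s i. (s, i) \<in> E \<and> 0 \<le> s \<and> s \<le> T \<and> i \<le> J \<longleftrightarrow> i \<le> J \<and> \<tau> i \<le> s \<and> s \<le> \<tau> (Suc i)"
proof -
  from assms obtain \<tau> :: "nat \<Rightarrow> real" where "\<tau> 0 = 0" and mono: "\<forall>j\<le>J. \<tau> j \<le> \<tau> (Suc j)"
    and window: "E \<inter> ({0..T} \<times> {0..J}) = (\<Union>j\<le>J. {\<tau> j..\<tau> (Suc j)} \<times> {j})"
    unfolding hybrid_time_domain_def by blast
  moreover have "(s, i) \<in> E \<and> 0 \<le> s \<and> s \<le> T \<and> i \<le> J \<longleftrightarrow> i \<le> J \<and> \<tau> i \<le> s \<and> s \<le> \<tau> (Suc i)"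
    for s i
    using arg_cong[OF window, of "\<lambda>W. (s, i) \<in> W"] by auto
  ultimately show ?thesis
    using mono by (intro that) auto
qed

lemma hybrid_time_domain_nonneg: "hybrid_time_domain E \<Longrightarrow> (s, i) \<in> E \<Longrightarrow> 0 \<le> s"
  unfolding hybrid_time_domain_def by auto

lemma is_interval_tdom_slice:
  assumes "hybrid_time_domain E"
  shows "is_interval (tdom_slice E j)"
  unfolding is_interval_1
proof (intro ballI allI impI)
  fix a b s
  assume "a \<in> tdom_slice E j" "b \<in> tdom_slice E j" and s: "a \<le> s \<and> s \<le> b"
  then have ab: "(a, j) \<in> E" "(b, j) \<in> E"
    by (simp_all add: tdom_slice_def)
  obtain \<tau> where window: "\<And>s i. (s, i) \<in> E \<and> 0 \<le> s \<and> s \<le> b \<and> i \<le> j \<longleftrightarrow> i \<le> j \<and> \<tau> i \<le> s \<and> s \<le> \<tau> (Suc i)"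
    using hybrid_time_domainE[OF assms ab(2)] by metis
  have "0 \<le> a"
    using hybrid_time_domain_nonneg[OF assms ab(1)] .
  then show "s \<in> tdom_slice E j"
    using window[of a j] window[of b j] window[of s j] ab s by (auto simp: tdom_slice_def)
qed

lemma atLeastAtMost_subset_tdom_slice:
  assumes "hybrid_time_domain E" "(a, j) \<in> E" "(b, j) \<in> E"
  shows "{a..b} \<subseteq> tdom_slice E j"
proof
  fix x
  assume "x \<in> {a..b}"
  moreover have "a \<in> tdom_slice E j" "b \<in> tdom_slice E j"
    using assms(2,3) by (simp_all add: tdom_slice_def)
  ultimately show "x \<in> tdom_slice E j"
    using mem_is_interval_1_I[OF is_interval_tdom_slice[OF assms(1)]] by (meson atLeastAtMost_iff)
qed

lemma hybrid_time_domain_prefix: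
  assumes E: "hybrid_time_domain E" and E': "hybrid_time_domain E'" and "E \<subseteq> E'"
    and TJ: "(T, J) \<in> E" and si: "(s, i) \<in> E'" "s \<le> T" "i \<le> J"
  shows "(s, i) \<in> E"
proof -
  obtain \<tau> where "\<tau> 0 = 0" and \<tau>_mono: "\<And>j. j \<le> J \<Longrightarrow> \<tau> j \<le> \<tau> (Suc j)"
    and \<tau>: "\<And>s i. (s, i) \<in> E \<and> 0 \<le> s \<and> s \<le> T \<and> i \<le> J \<longleftrightarrow> i \<le> J \<and> \<tau> i \<le> s \<and> s \<le> \<tau> (Suc i)"
    using hybrid_time_domainE[OF E TJ] by metis
  obtain \<sigma> where "\<sigma> 0 = 0"
    and \<sigma>: "\<And>s i. (s, i) \<in> E' \<and> 0 \<le> s \<and> s \<le> T \<and> i \<le> J \<longleftrightarrow> i \<le> J \<and> \<sigma> i \<le> s \<and> s \<le> \<sigma> (Suc i)"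
    using hybrid_time_domainE[OF E' subsetD[OF \<open>E \<subseteq> E'\<close> TJ]] by metis
  have \<sigma>_\<tau>: "\<sigma> k \<le> x \<and> x \<le> \<sigma> (Suc k)" if "k \<le> J" "\<tau> k \<le> x" "x \<le> \<tau> (Suc k)" for x k
  proof -
    have "(x, k) \<in> E \<and> 0 \<le> x \<and> x \<le> T"
      using \<tau>[of x k] that by simp
    then show ?thesis
      using \<sigma>[of x k] that \<open>E \<subseteq> E'\<close> by auto
  qed
  have same_switching: "\<sigma> k = \<tau> k" if "k \<le> J" for k
  proof (cases k)
    case 0
    then show ?thesis
      using \<open>\<tau> 0 = 0\<close> \<open>\<sigma> 0 = 0\<close> by simp
  next
    case (Suc m)
    have "\<sigma> k \<le> \<tau> k"
      using \<sigma>_\<tau>[of k "\<tau> k"] \<tau>_mono[of k] that by simp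
    moreover have "\<tau> k \<le> \<sigma> k"
      using \<sigma>_\<tau>[of m "\<tau> k"] \<tau>_mono[of m] that Suc by simp
    ultimately show ?thesis
      by simp
  qed
  have "0 \<le> s"
    using hybrid_time_domain_nonneg[OF E' si(1)] .
  then have \<sigma>_s: "\<sigma> i \<le> s" "s \<le> \<sigma> (Suc i)"
    using \<sigma>[of s i] si by auto
  have "s \<le> \<tau> (Suc i)"
  proof (cases "i < J")
    case True
    then show ?thesis
      using same_switching[of "Suc i"] \<sigma>_s by simp
  next
    case False
    then show ?thesis
      using \<tau>[of T J] TJ hybrid_time_domain_nonneg[OF E TJ] si by auto
  qed
  then show ?thesis
    using \<tau>[of s i] same_switching[of i] \<sigma>_s si \<open>0 \<le> s\<close> by simp
qed

lemma hybrid_time_domain_jump_time_le: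
  assumes E: "hybrid_time_domain E" and jump: "(t, j) \<in> E" "(t, Suc j) \<in> E"
    and s: "(s, Suc j) \<in> E"
  shows "t \<le> s"
proof (rule ccontr)
  assume "\<not> t \<le> s"
  obtain \<tau> where \<tau>: "\<And>s i. (s, i) \<in> E \<and> 0 \<le> s \<and> s \<le> t \<and> i \<le> Suc j \<longleftrightarrow>
      i \<le> Suc j \<and> \<tau> i \<le> s \<and> s \<le> \<tau> (Suc i)"
    using hybrid_time_domainE[OF E jump(2)] by metis
  have "t \<le> \<tau> (Suc j)"
    using \<tau>[of t j] jump(1) hybrid_time_domain_nonneg[OF E jump(1)] by simp
  moreover have "\<tau> (Suc j) \<le> s"
    using \<tau>[of s "Suc j"] s hybrid_time_domain_nonneg[OF E s] \<open>\<not> t \<le> s\<close> by simp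
  ultimately show False
    using \<open>\<not> t \<le> s\<close> by simp
qed

lemma hybrid_time_domain_no_flow:
  assumes E: "hybrid_time_domain E" and no_flow: "\<And>j. interior (tdom_slice E j) = {}"
    and TJ: "(T, J) \<in> E"
  shows "T = 0" and "\<And>i. i \<le> J \<Longrightarrow> (0, i) \<in> E"
proof -
  obtain \<tau> where "\<tau> 0 = 0" and \<tau>_mono: "\<And>j. j \<le> J \<Longrightarrow> \<tau> j \<le> \<tau> (Suc j)"
    and \<tau>: "\<And>s i. (s, i) \<in> E \<and> 0 \<le> s \<and> s \<le> T \<and> i \<le> J \<longleftrightarrow> i \<le> J \<and> \<tau> i \<le> s \<and> s \<le> \<tau> (Suc i)"
    using hybrid_time_domainE[OF E TJ] by metis
  have "\<tau> (Suc i) = \<tau> i" if "i \<le> J" for i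
  proof -
    have "{\<tau> i..\<tau> (Suc i)} \<subseteq> tdom_slice E i"
    proof
      fix x
      assume "x \<in> {\<tau> i..\<tau> (Suc i)}"
      then show "x \<in> tdom_slice E i"
        using \<tau>[of x i] that by (simp add: tdom_slice_def)
    qed
    then have "interior {\<tau> i..\<tau> (Suc i)} = {}"
      using no_flow[of i] interior_mono by blast
    then show ?thesis
      using \<tau>_mono[OF that] by simp
  qed
  then have \<tau>_zero: "\<tau> i = 0" if "i \<le> Suc J" for i
    using that by (induction i) (simp_all add: \<open>\<tau> 0 = 0\<close>)
  show "T = 0"
    using \<tau>[of T J] TJ hybrid_time_domain_nonneg[OF E TJ] \<tau>_zero[of J] \<tau>_zero[of "Suc J"] by simp
  show "(0, i) \<in> E" if "i \<le> J" for i
    using \<tau>[of 0 i] \<tau>_zero[of i] \<tau>_zero[of "Suc i"] that hybrid_time_domain_nonneg[OF E TJ] by simp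
qed

lemma hybrid_time_domain_discrete: "hybrid_time_domain ({0} \<times> {..n})"
  unfolding hybrid_time_domain_def
  by (auto intro!: exI[of _ "\<lambda>_. 0"])

lemma hybrid_time_domain_flow: "0 \<le> e \<Longrightarrow> hybrid_time_domain ({0..e} \<times> {0})"
  unfolding hybrid_time_domain_def
  by (auto intro!: exI[of _ "\<lambda>i. if i = 0 then 0 else T" for T])

lemma hybrid_time_domain_chain_Union:
  assumes chain: "chain\<^sub>\<subseteq> \<E>" and htd: "\<And>E. E \<in> \<E> \<Longrightarrow> hybrid_time_domain E"
  shows "hybrid_time_domain (\<Union>\<E>)"
  unfolding hybrid_time_domain_def
proof (intro conjI allI impI)
  show "\<Union>\<E> \<subseteq> {0..} \<times> UNIV"
    using hybrid_time_domain_nonneg[OF htd] by fastforce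
  fix T J
  assume "(T, J) \<in> \<Union>\<E>"
  then obtain E0 where E0: "E0 \<in> \<E>" "(T, J) \<in> E0"
    by blast
  have "\<Union>\<E> \<inter> ({0..T} \<times> {0..J}) \<subseteq> E0"
  proof (clarify)
    fix s i E
    assume E: "E \<in> \<E>" "(s, i) \<in> E" and "s \<in> {0..T}" "i \<in> {0..J}"
    show "(s, i) \<in> E0"
    proof (cases "E \<subseteq> E0")
      case True
      then show ?thesis
        using E(2) by blast
    next
      case False
      then have "E0 \<subseteq> E"
        using chain E0(1) E(1) unfolding chain_subset_def by blast
      then show ?thesis
        using hybrid_time_domain_prefix[OF htd[OF E0(1)] htd[OF E(1)] _ E0(2) E(2)]
          \<open>s \<in> {0..T}\<close> \<open>i \<in> {0..J}\<close> by simp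
    qed
  qed
  then have "\<Union>\<E> \<inter> ({0..T} \<times> {0..J}) = E0 \<inter> ({0..T} \<times> {0..J})"
    using E0(1) by blast
  with htd[OF E0(1)] E0(2)
  show "\<exists>\<tau>::nat \<Rightarrow> real. \<tau> 0 = 0 \<and> (\<forall>j\<le>J. \<tau> j \<le> \<tau> (Suc j)) \<and>
      \<Union>\<E> \<inter> ({0..T} \<times> {0..J}) = (\<Union>j\<le>J. {\<tau> j..\<tau> (Suc j)} \<times> {j})"
    unfolding hybrid_time_domain_def by simp
qed

lemma interior_tdom_slice_chain_Union:
  assumes chain: "chain\<^sub>\<subseteq> \<E>" and htd: "\<And>E. E \<in> \<E> \<Longrightarrow> hybrid_time_domain E"
  shows "interior (tdom_slice (\<Union>\<E>) j) \<subseteq> (\<Union>E\<in>\<E>. interior (tdom_slice E j))"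
proof
  fix t
  assume "t \<in> interior (tdom_slice (\<Union>\<E>) j)"
  then obtain e where "e > 0" and e: "ball t e \<subseteq> tdom_slice (\<Union>\<E>) j"
    by (meson interior_subset open_contains_ball open_interior subset_trans)
  then have "(t - e/2, j) \<in> \<Union>\<E>" "(t + e/2, j) \<in> \<Union>\<E>"
    by (auto simp: tdom_slice_def subset_iff dist_real_def)
  then obtain E where E: "E \<in> \<E>" "(t - e/2, j) \<in> E" "(t + e/2, j) \<in> E"
    by (rule chain_subset_Union_two_points[OF chain])
  have "{t - e/2..t + e/2} \<subseteq> tdom_slice E j"
    using atLeastAtMost_subset_tdom_slice[OF htd[OF E(1)] E(2,3)] .
  then have "interior {t - e/2..t + e/2} \<subseteq> interior (tdom_slice E j)"
    by (rule interior_mono)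
  moreover have "t \<in> interior {t - e/2..t + e/2}"
    using \<open>e > 0\<close> by simp
  ultimately show "t \<in> (\<Union>E\<in>\<E>. interior (tdom_slice E j))"
    using E(1) by blast
qed

section \<open>Solutions\<close>

definition flows_at :: "('a::real_normed_vector \<Rightarrow> 'a set) \<Rightarrow> (real \<times> nat) set \<Rightarrow> (real \<times> nat \<Rightarrow> 'a)
    \<Rightarrow> nat \<Rightarrow> real \<Rightarrow> bool" where
  "flows_at F E \<phi> j t \<longleftrightarrow> (\<exists>v. ((\<lambda>s. \<phi> (s, j)) has_vector_derivative v) (at t within tdom_slice E j)
     \<and> v \<in> F (\<phi> (t, j)))"

lemma is_solutionI:
  assumes "hybrid_time_domain E"
    and "\<And>a b j. {a..b} \<subseteq> tdom_slice E j \<Longrightarrow> absolutely_continuous_fun_on {a..b} (\<lambda>t. \<phi> (t, j))"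
    and "(0, 0) \<in> E" "\<phi> (0, 0) \<in> closure C \<union> D"
    and "\<And>t j. t \<in> interior (tdom_slice E j) \<Longrightarrow> \<phi> (t, j) \<in> C"
    and "\<And>j. interior (tdom_slice E j) \<noteq> {} \<Longrightarrow>
      AE t in lebesgue. t \<in> tdom_slice E j \<longrightarrow> flows_at F E \<phi> j t"
    and "\<And>t j. (t, j) \<in> E \<Longrightarrow> (t, Suc j) \<in> E \<Longrightarrow> \<phi> (t, j) \<in> D \<and> \<phi> (t, Suc j) \<in> G (\<phi> (t, j))"
  shows "is_solution C F D G E \<phi>"
  using assms unfolding is_solution_def hybrid_arc_def locally_absolutely_continuous_on_def flows_at_def
  by blast

lemma
  assumes "is_solution C F D G E \<phi>"
  shows is_solution_time_domain: "hybrid_time_domain E"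
    and is_solution_absolutely_continuous:
      "{a..b} \<subseteq> tdom_slice E j \<Longrightarrow> absolutely_continuous_fun_on {a..b} (\<lambda>t. \<phi> (t, j))"
    and is_solution_origin: "(0, 0) \<in> E"
    and is_solution_start: "\<phi> (0, 0) \<in> closure C \<union> D"
    and is_solution_flow_set: "t \<in> interior (tdom_slice E j) \<Longrightarrow> \<phi> (t, j) \<in> C"
    and is_solution_flows_at:
      "interior (tdom_slice E j) \<noteq> {} \<Longrightarrow> AE t in lebesgue. t \<in> tdom_slice E j \<longrightarrow> flows_at F E \<phi> j t"
    and is_solution_jump:
      "(t, j) \<in> E \<Longrightarrow> (t, Suc j) \<in> E \<Longrightarrow> \<phi> (t, j) \<in> D \<and> \<phi> (t, Suc j) \<in> G (\<phi> (t, j))"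
  using assms unfolding is_solution_def hybrid_arc_def locally_absolutely_continuous_on_def flows_at_def
  by (blast | metis empty_iff)+

lemma is_solution_discrete:
  assumes "\<phi> (0, 0) \<in> closure C \<union> D"
    and "\<And>j. j < n \<Longrightarrow> \<phi> (0, j) \<in> D \<and> \<phi> (0, Suc j) \<in> G (\<phi> (0, j))"
  shows "is_solution C F D G ({0} \<times> {..n}) \<phi>"
proof -
  have slice: "tdom_slice ({0} \<times> {..n}) j \<subseteq> {0}" for j
    by (auto simp: tdom_slice_def)
  then have no_interior: "interior (tdom_slice ({0} \<times> {..n}) j) = {}" for j
    by (metis interior_mono interior_singleton subset_empty)
  show ?thesis
  proof (rule is_solutionI)
    show "absolutely_continuous_fun_on {a..b} (\<lambda>t. \<phi> (t, j))"
      if "{a..b} \<subseteq> tdom_slice ({0} \<times> {..n}) j" for a b j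
      using that slice by (intro absolutely_continuous_fun_on_subsingleton) blast
  qed (use assms no_interior hybrid_time_domain_discrete in \<open>auto simp: Suc_le_eq\<close>)
qed

lemma flows_at_translate:
  assumes int: "c + u \<in> interior (tdom_slice E j)" and flow: "flows_at F E \<phi> j (c + u)"
    and \<psi>: "\<And>s. c + s \<in> interior (tdom_slice E j) \<Longrightarrow> \<psi> (s, i) = \<phi> (c + s, j)"
  shows "flows_at F E' \<psi> i u"
proof -
  obtain v where "((\<lambda>s. \<phi> (s, j)) has_vector_derivative v) (at (c + u) within tdom_slice E j)"
    and v: "v \<in> F (\<phi> (c + u, j))"
    using flow unfolding flows_at_def by blast
  then have "((\<lambda>s. \<phi> (s, j)) has_vector_derivative v) (at (c + u))"
    using at_within_interior[OF int] by simp
  then have "(((\<lambda>s. \<phi> (s, j)) \<circ> (\<lambda>s. c + s)) has_vector_derivative (1 *\<^sub>R v)) (at u)"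
    by (intro vector_diff_chain_at) (auto intro!: derivative_eq_intros)
  then have "((\<lambda>s. \<phi> (c + s, j)) has_vector_derivative v) (at u)"
    by (simp add: o_def)
  moreover have "open ((\<lambda>s. c + s) -` interior (tdom_slice E j))"
    by (intro continuous_open_vimage open_interior continuous_intros)
  ultimately have "((\<lambda>s. \<psi> (s, i)) has_vector_derivative v) (at u)"
    by (rule has_vector_derivative_transform_within_open) (simp_all add: int \<psi>)
  then show ?thesis
    using v \<psi>[OF int] unfolding flows_at_def by (auto intro: has_vector_derivative_at_within)
qed

lemma is_solution_flow_segment:
  assumes sol: "is_solution C F D G E \<phi>"
    and "0 \<le> e" and segment: "{t..t + e} \<subseteq> interior (tdom_slice E j)"
  shows "is_solution C F D G ({0..e} \<times> {0}) (\<lambda>s. \<phi> (t + fst s, j))"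
    (is "is_solution C F D G ?E ?\<psi>")
proof -
  have slice: "tdom_slice ?E i \<subseteq> {0..e}" for i
    by (auto simp: tdom_slice_def)
  have shifted: "t + u \<in> interior (tdom_slice E j)" if "u \<in> {0..e}" for u
    using that segment by auto
  have "AE u in lebesgue. t + u \<in> tdom_slice E j \<longrightarrow> flows_at F E \<phi> j (t + u)"
    using is_solution_flows_at[OF sol] shifted[of 0] \<open>0 \<le> e\<close> by (intro AE_lebesgue_translate) auto
  then have flows: "AE u in lebesgue. u \<in> tdom_slice ?E i \<longrightarrow> flows_at F ?E ?\<psi> i u" for i
  proof (rule eventually_mono, intro impI)
    fix u
    assume "u \<in> tdom_slice ?E i" and flow: "t + u \<in> tdom_slice E j \<longrightarrow> flows_at F E \<phi> j (t + u)"
    then have int: "t + u \<in> interior (tdom_slice E j)"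
      using slice shifted by blast
    with flow have "flows_at F E \<phi> j (t + u)"
      using interior_subset by blast
    with int show "flows_at F ?E ?\<psi> i u"
      by (rule flows_at_translate) simp
  qed
  show ?thesis
  proof (rule is_solutionI)
    show "absolutely_continuous_fun_on {a..b} (\<lambda>u. ?\<psi> (u, i))"
      if "{a..b} \<subseteq> tdom_slice ?E i" for a b i
    proof (rule absolutely_continuous_fun_on_translate)
      have "{a + t..b + t} \<subseteq> tdom_slice E j"
      proof
        fix x
        assume "x \<in> {a + t..b + t}"
        then have "x - t \<in> {a..b}"
          by auto
        then have "x - t \<in> {0..e}"
          using that slice by blast
        then show "x \<in> tdom_slice E j"
          using shifted[of "x - t"] interior_subset by auto
      qed
      then show "absolutely_continuous_fun_on ((+) t ` {a..b}) (\<lambda>s. \<phi> (s, j))"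
        using is_solution_absolutely_continuous[OF sol] by simp
    qed simp
    show "?\<psi> (0, 0) \<in> closure C \<union> D"
      using is_solution_flow_set[OF sol shifted[of 0]] closure_subset \<open>0 \<le> e\<close> by auto
    show "?\<psi> (u, i) \<in> C" if "u \<in> interior (tdom_slice ?E i)" for u i
    proof -
      have "u \<in> {0..e}"
        using that slice interior_subset by blast
      then show ?thesis
        using is_solution_flow_set[OF sol shifted] by simp
    qed
  qed (use \<open>0 \<le> e\<close> hybrid_time_domain_flow flows in auto)
qed

lemma flow_from_interior_point:
  assumes sol: "is_solution C F D G E \<phi>" and t: "t \<in> interior (tdom_slice E j)"
  shows "\<exists>E' \<psi> \<epsilon>. is_solution C F D G E' \<psi> \<and> \<psi> (0, 0) = \<phi> (t, j) \<and> \<epsilon> > 0 \<and> {0..<\<epsilon>} \<times> {0} \<subseteq> E'"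
proof -
  obtain e where "e > 0" and "ball t e \<subseteq> interior (tdom_slice E j)"
    using t open_contains_ball open_interior by blast
  then have "{t..t + e/2} \<subseteq> interior (tdom_slice E j)"
    by (force simp: dist_real_def)
  with sol \<open>e > 0\<close> have "is_solution C F D G ({0..e/2} \<times> {0}) (\<lambda>s. \<phi> (t + fst s, j))"
    by (intro is_solution_flow_segment) auto
  with \<open>e > 0\<close> show ?thesis
    by (intro exI[of _ "{0..e/2} \<times> {0}"] exI[of _ "\<lambda>s. \<phi> (t + fst s, j)"] exI[of _ "e/2"]) auto
qed

lemma is_solution_flows_at_interior:
  assumes sol: "is_solution C F D G E \<phi>" and agree: "\<And>s. s \<in> E \<Longrightarrow> \<psi> s = \<phi> s"
  shows "AE t in lebesgue. t \<in> interior (tdom_slice E j) \<longrightarrow> flows_at F E' \<psi> j t"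
proof (cases "interior (tdom_slice E j) = {}")
  case False
  have shift: "\<psi> (s, j) = \<phi> (0 + s, j)" if "0 + s \<in> interior (tdom_slice E j)" for s
    using agree that interior_subset by (auto simp: tdom_slice_def)
  from is_solution_flows_at[OF sol False]
  show ?thesis
  proof (rule eventually_mono, intro impI)
    fix t
    assume flow: "t \<in> tdom_slice E j \<longrightarrow> flows_at F E \<phi> j t"
      and "t \<in> interior (tdom_slice E j)"
    then have int: "0 + t \<in> interior (tdom_slice E j)"
      by simp
    with flow have "flows_at F E \<phi> j (0 + t)"
      using interior_subset by auto
    from flows_at_translate[OF int this shift] show "flows_at F E' \<psi> j t" .
  qed
qed simp

lemma is_solution_chain_Union:
  assumes "\<S> \<noteq> {}" and chain: "chain\<^sub>\<subseteq> (fst ` \<S>)"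
    and sol: "\<And>E \<phi>. (E, \<phi>) \<in> \<S> \<Longrightarrow> is_solution C F D G E \<phi>"
    and agree: "\<And>E \<phi> s. (E, \<phi>) \<in> \<S> \<Longrightarrow> s \<in> E \<Longrightarrow> \<psi> s = \<phi> s"
  shows "is_solution C F D G (\<Union>(fst ` \<S>)) \<psi>"
proof -
  let ?U = "\<Union>(fst ` \<S>)"
  have htd: "hybrid_time_domain E" if "E \<in> fst ` \<S>" for E
    using that is_solution_time_domain[OF sol] by auto
  have common: "\<exists>E \<phi>. (E, \<phi>) \<in> \<S> \<and> x \<in> E \<and> y \<in> E" if xy: "x \<in> ?U" "y \<in> ?U" for x y
  proof -
    obtain E where "E \<in> fst ` \<S>" "x \<in> E" "y \<in> E"
      by (rule chain_subset_Union_two_points[OF chain xy])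
    then show ?thesis
      by auto
  qed
  have agree_slice: "\<psi> (t, j) = \<phi> (t, j)" if "(E, \<phi>) \<in> \<S>" "t \<in> tdom_slice E j" for E \<phi> t j
    using agree that by (simp add: tdom_slice_def)
  have flows_U: "AE t in lebesgue. t \<in> U \<longrightarrow> flows_at F ?U \<psi> j t"
    if "U \<in> (\<lambda>E. interior (tdom_slice E j)) ` fst ` \<S>" for U j
  proof -
    from that obtain E \<phi> where E: "(E, \<phi>) \<in> \<S>" and U: "U = interior (tdom_slice E j)"
      by force
    show ?thesis
      unfolding U by (rule is_solution_flows_at_interior[OF sol[OF E] agree[OF E]])
  qed
  show ?thesis
  proof (rule is_solutionI)
    show "hybrid_time_domain ?U"
      using hybrid_time_domain_chain_Union[OF chain] htd by blast
    show "absolutely_continuous_fun_on {a..b} (\<lambda>t. \<psi> (t, j))"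
      if ab: "{a..b} \<subseteq> tdom_slice ?U j" for a b j
    proof (cases "a \<le> b")
      case True
      with ab have "(a, j) \<in> ?U" "(b, j) \<in> ?U"
        by (auto simp: tdom_slice_def)
      then obtain E \<phi> where E: "(E, \<phi>) \<in> \<S>" "(a, j) \<in> E" "(b, j) \<in> E"
        using common by blast
      then have slice: "{a..b} \<subseteq> tdom_slice E j"
        using atLeastAtMost_subset_tdom_slice[OF is_solution_time_domain[OF sol]] by blast
      show ?thesis
      proof (rule absolutely_continuous_fun_on_translate[where c = 0])
        show "absolutely_continuous_fun_on ((+) 0 ` {a..b}) (\<lambda>t. \<phi> (t, j))"
          using is_solution_absolutely_continuous[OF sol[OF E(1)] slice] by simp
      qed (use agree_slice[OF E(1)] slice in auto)
    qed (auto intro: absolutely_continuous_fun_on_subsingleton)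
    obtain E \<phi> where E: "(E, \<phi>) \<in> \<S>"
      using \<open>\<S> \<noteq> {}\<close> by auto
    have "(0, 0) \<in> E"
      using is_solution_origin[OF sol[OF E]] .
    then show "(0, 0) \<in> ?U"
      using UnionI[OF imageI[OF E], of "(0, 0)" fst] by simp
    show "\<psi> (0, 0) \<in> closure C \<union> D"
      using is_solution_start[OF sol[OF E]] agree[OF E \<open>(0, 0) \<in> E\<close>] by simp
    show "\<psi> (t, j) \<in> C" if t: "t \<in> interior (tdom_slice ?U j)" for t j
    proof -
      obtain E \<phi> where "(E, \<phi>) \<in> \<S>" "t \<in> interior (tdom_slice E j)"
        using interior_tdom_slice_chain_Union[OF chain htd] t by force
      then show ?thesis
        using is_solution_flow_set[OF sol] agree_slice interior_subset by (metis subsetD)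
    qed
    show "AE t in lebesgue. t \<in> tdom_slice ?U j \<longrightarrow> flows_at F ?U \<psi> j t" for j
    proof (rule AE_convex_open_cover[OF _ _ _ flows_U])
      show "convex (tdom_slice ?U j)"
        using is_interval_tdom_slice[OF \<open>hybrid_time_domain ?U\<close>] is_interval_convex_1 by blast
    qed (use interior_tdom_slice_chain_Union[OF chain htd] in auto)
    show "\<psi> (t, j) \<in> D \<and> \<psi> (t, Suc j) \<in> G (\<psi> (t, j))"
      if jump: "(t, j) \<in> ?U" "(t, Suc j) \<in> ?U" for t j
    proof -
      obtain E \<phi> where E: "(E, \<phi>) \<in> \<S>" "(t, j) \<in> E" "(t, Suc j) \<in> E"
        using common[OF jump] by blast
      then show ?thesis
        using is_solution_jump[OF sol[OF E(1)] E(2,3)] agree[OF E(1) E(2)] agree[OF E(1) E(3)] by simp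
    qed
  qed
qed

section \<open>Maximal solutions\<close>

text \<open>Comparing solutions through their graphs turns extension into set inclusion, to which Zorn's
  lemma applies.\<close>

definition graph_of :: "'b set \<Rightarrow> ('b \<Rightarrow> 'c) \<Rightarrow> ('b \<times> 'c) set" where
  "graph_of E \<phi> = (\<lambda>s. (s, \<phi> s)) ` E"

lemma mem_graph_of_iff [simp]: "(s, v) \<in> graph_of E \<phi> \<longleftrightarrow> s \<in> E \<and> v = \<phi> s"
  unfolding graph_of_def by auto

lemma graph_of_subset_iff: "graph_of E \<phi> \<subseteq> graph_of E' \<phi>' \<longleftrightarrow> E \<subseteq> E' \<and> (\<forall>s\<in>E. \<phi> s = \<phi>' s)"
  unfolding graph_of_def by auto

lemma fst_image_graph_of: "fst ` graph_of E \<phi> = E"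
  unfolding graph_of_def by force

lemma chain_Union_solution_graphs:
  assumes "\<C> \<noteq> {}" and chain: "chain\<^sub>\<subseteq> \<C>"
    and graphs: "\<And>\<Gamma>. \<Gamma> \<in> \<C> \<Longrightarrow> \<exists>E \<phi>. is_solution C F D G E \<phi> \<and> \<Gamma> = graph_of E \<phi>"
  shows "\<exists>E \<psi>. is_solution C F D G E \<psi> \<and> \<Union>\<C> = graph_of E \<psi>"
proof -
  define \<S> where "\<S> = {(E, \<phi>). is_solution C F D G E \<phi> \<and> graph_of E \<phi> \<in> \<C>}"
  define \<psi> where "\<psi> s = (SOME v. (s, v) \<in> \<Union>\<C>)" for s
  have \<C>_graphs: "\<exists>E \<phi>. (E, \<phi>) \<in> \<S> \<and> \<Gamma> = graph_of E \<phi>" if \<Gamma>: "\<Gamma> \<in> \<C>" for \<Gamma>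
  proof -
    obtain E \<phi> where "is_solution C F D G E \<phi>" "\<Gamma> = graph_of E \<phi>"
      using graphs[OF \<Gamma>] by blast
    with \<Gamma> show ?thesis
      unfolding \<S>_def by auto
  qed
  have single_valued: "v = w" if sv: "(s, v) \<in> \<Union>\<C>" "(s, w) \<in> \<Union>\<C>" for s v w
  proof -
    obtain \<Gamma> where "\<Gamma> \<in> \<C>" "(s, v) \<in> \<Gamma>" "(s, w) \<in> \<Gamma>"
      by (rule chain_subset_Union_two_points[OF chain sv])
    then show ?thesis
      using \<C>_graphs by fastforce
  qed
  have agree: "\<psi> s = \<phi> s" if "(E, \<phi>) \<in> \<S>" "s \<in> E" for E \<phi> s
  proof -
    have "graph_of E \<phi> \<in> \<C>"
      using that(1) unfolding \<S>_def by simp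
    moreover have "(s, \<phi> s) \<in> graph_of E \<phi>"
      using that(2) by simp
    ultimately have "(s, \<phi> s) \<in> \<Union>\<C>"
      by blast
    with single_valued show ?thesis
      unfolding \<psi>_def by (intro some_equality) blast+
  qed
  have chain_domains: "chain\<^sub>\<subseteq> (fst ` \<S>)"
    unfolding chain_subset_def
  proof (intro ballI)
    fix E1 E2
    assume "E1 \<in> fst ` \<S>" "E2 \<in> fst ` \<S>"
    then obtain \<phi>1 \<phi>2 where "graph_of E1 \<phi>1 \<in> \<C>" "graph_of E2 \<phi>2 \<in> \<C>"
      unfolding \<S>_def by force
    then have "graph_of E1 \<phi>1 \<subseteq> graph_of E2 \<phi>2 \<or> graph_of E2 \<phi>2 \<subseteq> graph_of E1 \<phi>1"
      using chain unfolding chain_subset_def by blast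
    then show "E1 \<subseteq> E2 \<or> E2 \<subseteq> E1"
      unfolding graph_of_subset_iff by blast
  qed
  let ?U = "\<Union>(fst ` \<S>)"
  have "is_solution C F D G ?U \<psi>"
    using \<open>\<C> \<noteq> {}\<close> \<C>_graphs chain_domains agree unfolding \<S>_def
    by (intro is_solution_chain_Union) blast+
  moreover have "\<Union>\<C> = graph_of ?U \<psi>"
  proof (intro subset_antisym subsetI)
    fix x
    assume "x \<in> \<Union>\<C>"
    then obtain E \<phi> where "(E, \<phi>) \<in> \<S>" "x \<in> graph_of E \<phi>"
      using \<C>_graphs by blast
    then show "x \<in> graph_of ?U \<psi>"
      using agree unfolding graph_of_def by force
  next
    fix x
    assume "x \<in> graph_of ?U \<psi>"
    then obtain E \<phi> s where E: "(E, \<phi>) \<in> \<S>" "s \<in> E" and x: "x = (s, \<psi> s)"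
      unfolding graph_of_def by force
    then have "x \<in> graph_of E \<phi>"
      using agree[OF E] by simp
    moreover have "graph_of E \<phi> \<in> \<C>"
      using E(1) unfolding \<S>_def by simp
    ultimately show "x \<in> \<Union>\<C>"
      by blast
  qed
  ultimately show ?thesis
    by blast
qed

lemma maximal_solution_extension:
  assumes sol0: "is_solution C F D G E0 \<phi>0"
  obtains E \<phi> where "maximal_solution C F D G E \<phi>" "E0 \<subseteq> E" "\<forall>s\<in>E0. \<phi> s = \<phi>0 s"
proof -
  define \<A> where "\<A> = {graph_of E \<phi> | E \<phi>. is_solution C F D G E \<phi> \<and> graph_of E0 \<phi>0 \<subseteq> graph_of E \<phi>}"
  have "\<exists>U\<in>\<A>. \<forall>\<Gamma>\<in>\<C>. \<Gamma> \<subseteq> U" if "\<C> \<in> chains \<A>" for \<C>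
  proof (cases "\<C> = {}")
    case True
    then show ?thesis
      using sol0 unfolding \<A>_def by blast
  next
    case False
    from that have "\<C> \<subseteq> \<A>" and chain: "chain\<^sub>\<subseteq> \<C>"
      by (simp_all add: chains_def)
    have "\<exists>E \<psi>. is_solution C F D G E \<psi> \<and> \<Union>\<C> = graph_of E \<psi>"
    proof (rule chain_Union_solution_graphs[OF False chain])
      fix \<Gamma>
      assume "\<Gamma> \<in> \<C>"
      with \<open>\<C> \<subseteq> \<A>\<close> show "\<exists>E \<phi>. is_solution C F D G E \<phi> \<and> \<Gamma> = graph_of E \<phi>"
        unfolding \<A>_def by blast
    qed
    moreover obtain \<Gamma> where "\<Gamma> \<in> \<C>"
      using False by blast
    then have "graph_of E0 \<phi>0 \<subseteq> \<Union>\<C>"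
      using \<open>\<C> \<subseteq> \<A>\<close> unfolding \<A>_def by blast
    ultimately have "\<Union>\<C> \<in> \<A>"
      unfolding \<A>_def by blast
    then show ?thesis
      by blast
  qed
  then obtain M where "M \<in> \<A>" and M_max: "\<forall>\<Gamma>\<in>\<A>. M \<subseteq> \<Gamma> \<longrightarrow> \<Gamma> = M"
    using Zorn_Lemma2[of \<A>] by blast
  then obtain E \<phi> where sol: "is_solution C F D G E \<phi>" and M: "M = graph_of E \<phi>"
    and extends: "graph_of E0 \<phi>0 \<subseteq> graph_of E \<phi>"
    unfolding \<A>_def by blast
  have "maximal_solution C F D G E \<phi>"
    unfolding maximal_solution_def
  proof (intro conjI sol notI)
    assume "\<exists>E' \<psi>. is_solution C F D G E' \<psi> \<and> E \<subset> E' \<and> (\<forall>s\<in>E. \<psi> s = \<phi> s)"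
    then obtain E' \<psi> where sol': "is_solution C F D G E' \<psi>" and "E \<subset> E'" "\<forall>s\<in>E. \<psi> s = \<phi> s"
      by blast
    then have larger: "graph_of E \<phi> \<subseteq> graph_of E' \<psi>"
      unfolding graph_of_subset_iff by auto
    with extends have "graph_of E0 \<phi>0 \<subseteq> graph_of E' \<psi>"
      by (rule subset_trans)
    with sol' have "graph_of E' \<psi> \<in> \<A>"
      unfolding \<A>_def by blast
    with M_max M larger have "graph_of E' \<psi> = graph_of E \<phi>"
      by blast
    then have "E' = E"
      by (metis fst_image_graph_of)
    with \<open>E \<subset> E'\<close> show False
      by simp
  qed
  moreover have "E0 \<subseteq> E" "\<forall>s\<in>E0. \<phi> s = \<phi>0 s"
    using extends unfolding graph_of_subset_iff by auto
  ultimately show thesis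
    by (rule that)
qed

section \<open>The characterization\<close>

lemma next_everywhere_extension:
  assumes always_next: "\<forall>E \<phi>. maximal_solution C F D G E \<phi> \<longrightarrow> (\<forall>s\<in>E. models_next E \<phi> s p)"
    and sol: "is_solution C F D G E0 \<phi>0"
  obtains E \<phi> where "is_solution C F D G E \<phi>" "E0 \<subseteq> E" "\<forall>s\<in>E0. \<phi> s = \<phi>0 s"
    "\<forall>t j. (t, j) \<in> E \<longrightarrow> (t, Suc j) \<in> E \<and> p (\<phi> (t, Suc j))"
proof -
  obtain E \<phi> where max: "maximal_solution C F D G E \<phi>"
    and extends: "E0 \<subseteq> E" "\<forall>s\<in>E0. \<phi> s = \<phi>0 s"
    by (rule maximal_solution_extension[OF sol])
  have "is_solution C F D G E \<phi>"
    using max unfolding maximal_solution_def by blast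
  moreover have "\<forall>t j. (t, j) \<in> E \<longrightarrow> (t, Suc j) \<in> E \<and> p (\<phi> (t, Suc j))"
    using always_next max unfolding models_next_def by fastforce
  ultimately show thesis
    using extends by (intro that)
qed

lemma next_everywhere_imp_start_in_jump_set:
  assumes always_next: "\<forall>E \<phi>. maximal_solution C F D G E \<phi> \<longrightarrow> (\<forall>s\<in>E. models_next E \<phi> s p)"
    and sol: "is_solution C F D G E \<phi>"
  shows "\<phi> (0, 0) \<in> D"
proof -
  obtain E' \<psi> where sol': "is_solution C F D G E' \<psi>" and "E \<subseteq> E'" "\<forall>s\<in>E. \<psi> s = \<phi> s"
    and always_next': "\<forall>t j. (t, j) \<in> E' \<longrightarrow> (t, Suc j) \<in> E' \<and> p (\<psi> (t, Suc j))"
    by (rule next_everywhere_extension[OF always_next sol])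
  moreover have "(0, 0) \<in> E"
    by (rule is_solution_origin[OF sol])
  ultimately show ?thesis
    using is_solution_jump[OF sol'] always_next' by fastforce
qed

lemma next_everywhere_imp_no_flow:
  assumes always_next: "\<forall>E \<phi>. maximal_solution C F D G E \<phi> \<longrightarrow> (\<forall>s\<in>E. models_next E \<phi> s p)"
  shows "\<not> (\<exists>x\<in>C. \<exists>E \<phi> \<epsilon>. is_solution C F D G E \<phi> \<and> \<phi> (0, 0) = x \<and> \<epsilon> > 0 \<and>
      {0..<\<epsilon>} \<times> {0} \<subseteq> E)"
proof clarify
  fix E \<phi> and \<epsilon> :: real
  assume sol: "is_solution C F D G E \<phi>" and "\<epsilon> > 0" and flow: "{0..<\<epsilon>} \<times> {0} \<subseteq> E"
  obtain E' \<psi> where sol': "is_solution C F D G E' \<psi>" and "E \<subseteq> E'" "\<forall>s\<in>E. \<psi> s = \<phi> s"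
    and always_next': "\<forall>t j. (t, j) \<in> E' \<longrightarrow> (t, Suc j) \<in> E' \<and> p (\<psi> (t, Suc j))"
    by (rule next_everywhere_extension[OF always_next sol])
  have "(\<epsilon>/2, 0) \<in> {0..<\<epsilon>} \<times> {0}" "(0, 0) \<in> {0..<\<epsilon>} \<times> {0}"
    using \<open>\<epsilon> > 0\<close> by auto
  then have "(\<epsilon>/2, 0) \<in> E'" "(0, 0) \<in> E'"
    using flow \<open>E \<subseteq> E'\<close> by blast+
  with always_next' have "\<epsilon>/2 \<le> 0"
    by (meson hybrid_time_domain_jump_time_le is_solution_time_domain[OF sol'])
  with \<open>\<epsilon> > 0\<close> show False
    by simp
qed

lemma next_everywhere_imp_jump_image:
  assumes always_next: "\<forall>E \<phi>. maximal_solution C F D G E \<phi> \<longrightarrow> (\<forall>s\<in>E. models_next E \<phi> s p)"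
  shows "sv_image G D \<subseteq> {y \<in> D. p y}"
proof
  fix y
  assume "y \<in> sv_image G D"
  then obtain x where "x \<in> D" "y \<in> G x"
    unfolding sv_image_def by blast
  let ?\<phi> = "\<lambda>s :: real \<times> nat. if snd s = 0 then x else y"
  have "is_solution C F D G ({0} \<times> {..Suc 0}) ?\<phi>"
    by (rule is_solution_discrete) (use \<open>x \<in> D\<close> \<open>y \<in> G x\<close> in auto)
  then obtain E \<psi> where sol: "is_solution C F D G E \<psi>" and "{0} \<times> {..Suc 0} \<subseteq> E"
    and agree: "\<forall>s\<in>{0} \<times> {..Suc 0}. \<psi> s = ?\<phi> s"
    and always_next': "\<forall>t j. (t, j) \<in> E \<longrightarrow> (t, Suc j) \<in> E \<and> p (\<psi> (t, Suc j))"
    by (rule next_everywhere_extension[OF always_next])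
  then have "(0, 0) \<in> E" "(0, Suc 0) \<in> E" "\<psi> (0, Suc 0) = y"
    by auto
  then show "y \<in> {y \<in> D. p y}"
    using always_next' is_solution_jump[OF sol] by (metis mem_Collect_eq)
qed

lemma next_everywhere_imp_closure_subset:
  assumes always_next: "\<forall>E \<phi>. maximal_solution C F D G E \<phi> \<longrightarrow> (\<forall>s\<in>E. models_next E \<phi> s p)"
  shows "closure C \<subseteq> D"
proof
  fix x
  assume "x \<in> closure C"
  then have "is_solution C F D G ({0} \<times> {..0}) (\<lambda>_. x)"
    by (intro is_solution_discrete) auto
  from next_everywhere_imp_start_in_jump_set[OF always_next this] show "x \<in> D" .
qed

lemma next_everywhere_imp_jump_conditions:
  assumes always_next: "\<forall>E \<phi>. maximal_solution C F D G E \<phi> \<longrightarrow> (\<forall>s\<in>E. models_next E \<phi> s p)"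
  shows "(\<forall>E \<phi>. nontrivial_solution C F D G E \<phi> \<longrightarrow> \<phi> (0, 0) \<in> D) \<and>
    \<not> (\<exists>x\<in>C. \<exists>E \<phi> \<epsilon>. is_solution C F D G E \<phi> \<and> \<phi> (0, 0) = x \<and> \<epsilon> > 0 \<and> {0..<\<epsilon>} \<times> {0} \<subseteq> E) \<and>
    sv_image G D \<subseteq> {y \<in> D. p y} \<and> closure C \<subseteq> D"
  using next_everywhere_imp_start_in_jump_set[OF always_next] next_everywhere_imp_no_flow[OF always_next]
    next_everywhere_imp_jump_image[OF always_next] next_everywhere_imp_closure_subset[OF always_next]
  unfolding nontrivial_solution_def by blast

lemma no_flow_imp_empty_interior:
  assumes no_flow: "\<not> (\<exists>x\<in>C. \<exists>E \<phi> \<epsilon>. is_solution C F D G E \<phi> \<and> \<phi> (0, 0) = x \<and> \<epsilon> > 0 \<and>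
      {0..<\<epsilon>} \<times> {0} \<subseteq> E)"
    and sol: "is_solution C F D G E \<phi>"
  shows "interior (tdom_slice E j) = {}"
proof (rule ccontr)
  assume "interior (tdom_slice E j) \<noteq> {}"
  then obtain t where t: "t \<in> interior (tdom_slice E j)"
    by blast
  with no_flow flow_from_interior_point[OF sol t] is_solution_flow_set[OF sol t] show False
    by blast
qed

lemma solution_in_jump_set_without_flow:
  assumes sol: "is_solution C F D G E \<phi>" and no_flow: "\<And>j. interior (tdom_slice E j) = {}"
    and "sv_image G D \<subseteq> D" "closure C \<subseteq> D"
  shows "(t, m) \<in> E \<Longrightarrow> \<phi> (t, m) \<in> D"
proof (induction m arbitrary: t)
  case 0
  with hybrid_time_domain_no_flow[OF is_solution_time_domain[OF sol] no_flow]
  have "t = 0"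
    by blast
  then show ?case
    using is_solution_start[OF sol] \<open>closure C \<subseteq> D\<close> by auto
next
  case (Suc m)
  with hybrid_time_domain_no_flow[OF is_solution_time_domain[OF sol] no_flow]
  have "t = 0" "(0, m) \<in> E"
    by auto
  with Suc have "\<phi> (0, m) \<in> D" "\<phi> (0, Suc m) \<in> G (\<phi> (0, m))"
    using is_solution_jump[OF sol] by auto
  with \<open>t = 0\<close> show ?case
    using \<open>sv_image G D \<subseteq> D\<close> unfolding sv_image_def by blast
qed

lemma maximal_solution_jumps_forever:
  assumes max: "maximal_solution C F D G E \<phi>" and no_flow: "\<And>j. interior (tdom_slice E j) = {}"
    and in_D: "\<And>t m. (t, m) \<in> E \<Longrightarrow> \<phi> (t, m) \<in> D" and "D \<subseteq> sv_dom G"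
  shows "(0, m) \<in> E"
proof (induction m)
  have sol: "is_solution C F D G E \<phi>"
    using max unfolding maximal_solution_def by blast
  note discrete = hybrid_time_domain_no_flow[OF is_solution_time_domain[OF sol] no_flow]
  case 0
  show ?case
    by (rule is_solution_origin[OF sol])
  case (Suc m)
  show ?case
  proof (rule ccontr)
    assume "(0, Suc m) \<notin> E"
    then have E: "E = {0} \<times> {..m}"
      using discrete Suc.IH by (fastforce simp: not_less_eq_eq)
    obtain g where g: "g \<in> G (\<phi> (0, m))"
      using in_D[OF Suc.IH] \<open>D \<subseteq> sv_dom G\<close> unfolding sv_dom_def by blast
    let ?\<psi> = "\<phi>((0, Suc m) := g)"
    have "is_solution C F D G ({0} \<times> {..Suc m}) ?\<psi>"
    proof (rule is_solution_discrete)
      show "?\<psi> (0, 0) \<in> closure C \<union> D"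
        using is_solution_start[OF sol] by simp
      show "?\<psi> (0, j) \<in> D \<and> ?\<psi> (0, Suc j) \<in> G (?\<psi> (0, j))" if "j < Suc m" for j
      proof (cases "j = m")
        case True
        then show ?thesis
          using in_D[OF Suc.IH] g by simp
      next
        case False
        with that E show ?thesis
          using is_solution_jump[OF sol, of 0 j] by simp
      qed
    qed
    moreover have "E \<subset> {0} \<times> {..Suc m}"
    proof
      show "E \<subseteq> {0} \<times> {..Suc m}"
        unfolding E by auto
      have "(0, Suc m) \<in> {0::real} \<times> {..Suc m}"
        by simp
      with \<open>(0, Suc m) \<notin> E\<close> show "E \<noteq> {0} \<times> {..Suc m}"
        by blast
    qed
    moreover have "\<forall>s\<in>E. ?\<psi> s = \<phi> s"
      using \<open>(0, Suc m) \<notin> E\<close> by auto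
    ultimately show False
      using max unfolding maximal_solution_def by blast
  qed
qed

lemma jump_conditions_imp_next_everywhere:
  assumes conditions: "(\<forall>E \<phi>. nontrivial_solution C F D G E \<phi> \<longrightarrow> \<phi> (0, 0) \<in> D) \<and>
    \<not> (\<exists>x\<in>C. \<exists>E \<phi> \<epsilon>. is_solution C F D G E \<phi> \<and> \<phi> (0, 0) = x \<and> \<epsilon> > 0 \<and> {0..<\<epsilon>} \<times> {0} \<subseteq> E) \<and>
    sv_image G D \<subseteq> {y \<in> D. p y} \<and> closure C \<subseteq> D"
    and "D \<subseteq> sv_dom G"
  shows "\<forall>E \<phi>. maximal_solution C F D G E \<phi> \<longrightarrow> (\<forall>s\<in>E. models_next E \<phi> s p)"
proof (intro allI impI ballI)
  fix E \<phi> s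
  assume max: "maximal_solution C F D G E \<phi>" and "s \<in> E"
  then obtain t j where s: "s = (t, j)" and "(t, j) \<in> E"
    by (cases s) blast
  have sol: "is_solution C F D G E \<phi>"
    using max unfolding maximal_solution_def by blast
  note no_flow = conditions[THEN conjunct2, THEN conjunct1]
    and jumps = conditions[THEN conjunct2, THEN conjunct2, THEN conjunct1]
    and closure_in_D = conditions[THEN conjunct2, THEN conjunct2, THEN conjunct2]
  note interior_empty = no_flow_imp_empty_interior[OF no_flow sol]
  have in_D: "\<And>t m. (t, m) \<in> E \<Longrightarrow> \<phi> (t, m) \<in> D"
    using solution_in_jump_set_without_flow[OF sol interior_empty] jumps closure_in_D by blast
  note forever = maximal_solution_jumps_forever[OF max interior_empty in_D \<open>D \<subseteq> sv_dom G\<close>]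
  have "t = 0"
    using hybrid_time_domain_no_flow(1)[OF is_solution_time_domain[OF sol] interior_empty \<open>(t, j) \<in> E\<close>] .
  moreover have "\<phi> (0, Suc j) \<in> sv_image G D"
    using is_solution_jump[OF sol forever forever] in_D[OF forever] unfolding sv_image_def by blast
  ultimately show "models_next E \<phi> s p"
    using forever jumps s unfolding models_next_def by auto
qed

theorem proposition4:
  fixes X C D :: "'a::euclidean_space set"
    and F G :: "'a \<Rightarrow> 'a set"
    and p :: "'a \<Rightarrow> bool"
    and K :: "'a set"
  assumes H: "hybrid_system X C F D G"
    and K_def: "K = {x \<in> X. p x}"
    and K_ne: "K \<noteq> {}"
  shows "(\<forall>E \<phi>. maximal_solution C F D G E \<phi> \<longrightarrow> (\<forall>s\<in>E. models_next E \<phi> s p))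
     \<longleftrightarrow>
     ((\<forall>E \<phi>. nontrivial_solution C F D G E \<phi> \<longrightarrow> \<phi> (0, 0) \<in> D) \<and>
      (\<not> (\<exists>x\<in>C. \<exists>E \<phi> \<epsilon>. is_solution C F D G E \<phi> \<and> \<phi> (0, 0) = x \<and> \<epsilon> > 0 \<and>
              {0..<\<epsilon>} \<times> {0} \<subseteq> E)) \<and>
      sv_image G D \<subseteq> K \<inter> D \<and>
      closure C \<subseteq> D)"
proof -
  have "sv_image G D \<subseteq> X" and "D \<subseteq> sv_dom G"
    using H unfolding hybrid_system_def sv_image_def by auto
  then have jumps_iff: "sv_image G D \<subseteq> K \<inter> D \<longleftrightarrow> sv_image G D \<subseteq> {y \<in> D. p y}"
    using K_def by auto
  show ?thesis
    unfolding jumps_iff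
    using next_everywhere_imp_jump_conditions jump_conditions_imp_next_everywhere[OF _ \<open>D \<subseteq> sv_dom G\<close>]
    by (rule iffI)
qed

end
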